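(* Fix $N\ge 1$ and let $\{\xi_{i,j}(s):1\le i,j\le N, s\ge 1\}$ be i.i.d. real random variables. Let $\Delta_N=\{y\in\mathbb R^N: y_1\ge y_2\ge\dots\ge y_N\}$ and define the Markov chain $Y$ on $\Delta_N$ by $$Y(t+1)=\text{ordered (non-increasing) vector of }\Big(\max_{1\le j\le N}\{Y_j(t)+\xi_{i,j}(t+1)\},\ 1\le i\le N\Big),$$ started from an arbitrary $Y(0)\in\Delta_N$. Let $Y^0(t)=Y(t)-Y_1(t)\mathbf 1$ (with $\mathbf 1=(1,\dots,1)$) be the process seen from the leading edge, a Markov chain on $\Delta_N^0=\{y\in\Delta_N:y_1=0\}$, and let $\nu_t$ be the law of $Y^0(t)$. Then there exists a unique invariant probability measure $\nu$ for $Y^0$, $\lim_{t\to\infty}\nu_t=\nu$, and there exists $\delta_N>0$ (independent of $Y(0)$) such that $\|\nu_t-\nu\|_{TV}\le(1-\delta_N)^t$ for all $t$.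
   Context: $\|\cdot\|_{TV}$ is the total variation distance. *)

theory Defs
  imports "HOL-Probability.Probability"
begin

text \<open>States: vectors in R^N, represented as extensional functions on the index set {..<N}
  (index 0 is the leading coordinate y_1).\<close>

definition stateM :: "nat \<Rightarrow> (nat \<Rightarrow> real) measure" where
  "stateM N = PiM {..<N} (\<lambda>_. borel)"

definition Delta :: "nat \<Rightarrow> (nat \<Rightarrow> real) set" where
  "Delta N = {y \<in> space (stateM N). \<forall>i j. i \<le> j \<longrightarrow> j < N \<longrightarrow> y j \<le> y i}"

definition Delta0 :: "nat \<Rightarrow> (nat \<Rightarrow> real) set" where
  "Delta0 N = {y \<in> Delta N. y 0 = 0}"

definition ord_desc :: "nat \<Rightarrow> (nat \<Rightarrow> real) \<Rightarrow> (nat \<Rightarrow> real)" where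
  "ord_desc N v = (\<lambda>k\<in>{..<N}. rev (sort (map v [0..<N])) ! k)"

definition step :: "nat \<Rightarrow> (nat \<Rightarrow> real) \<Rightarrow> (nat \<Rightarrow> nat \<Rightarrow> real) \<Rightarrow> (nat \<Rightarrow> real)" where
  "step N y x = ord_desc N (\<lambda>i. Max ((\<lambda>j. y j + x i j) ` {..<N}))"

definition shift0 :: "nat \<Rightarrow> (nat \<Rightarrow> real) \<Rightarrow> (nat \<Rightarrow> real)" where
  "shift0 N y = (\<lambda>i\<in>{..<N}. y i - y 0)"

fun Yproc :: "nat \<Rightarrow> (nat \<Rightarrow> nat \<Rightarrow> nat \<Rightarrow> 'a \<Rightarrow> real) \<Rightarrow> (nat \<Rightarrow> real) \<Rightarrow> nat \<Rightarrow> 'a \<Rightarrow> (nat \<Rightarrow> real)" where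
  "Yproc N \<xi> y0 0 \<omega> = y0"
| "Yproc N \<xi> y0 (Suc t) \<omega> = step N (Yproc N \<xi> y0 t \<omega>) (\<lambda>i j. \<xi> i j (Suc t) \<omega>)"

definition kernel0 :: "'a measure \<Rightarrow> nat \<Rightarrow> (nat \<Rightarrow> nat \<Rightarrow> nat \<Rightarrow> 'a \<Rightarrow> real) \<Rightarrow> (nat \<Rightarrow> real) \<Rightarrow> (nat \<Rightarrow> real) measure" where
  "kernel0 M N \<xi> y = distr M (stateM N) (\<lambda>\<omega>. shift0 N (step N y (\<lambda>i j. \<xi> i j 1 \<omega>)))"

definition invariant0 :: "'a measure \<Rightarrow> nat \<Rightarrow> (nat \<Rightarrow> nat \<Rightarrow> nat \<Rightarrow> 'a \<Rightarrow> real) \<Rightarrow> (nat \<Rightarrow> real) measure \<Rightarrow> bool" where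
  "invariant0 M N \<xi> \<nu> \<longleftrightarrow> sets \<nu> = sets (stateM N) \<and> prob_space \<nu> \<and> emeasure \<nu> (Delta0 N) = 1 \<and>
     (\<forall>A \<in> sets (stateM N). emeasure \<nu> A = (\<integral>\<^sup>+ y. emeasure (kernel0 M N \<xi> y) A \<partial>\<nu>))"

definition tv_dist :: "'b measure \<Rightarrow> 'b measure \<Rightarrow> real" where
  "tv_dist \<mu> \<nu> = (SUP A \<in> sets \<mu>. \<bar>measure \<mu> A - measure \<nu> A\<bar>)"

end

theory Submission
  imports Defs
begin

text \<open>
  If in every row of the noise matrix the entry in column 0 is maximal, the leading particle
  wins every maximum, so after the step the shape seen from the leading edge is the ordered
  column 0, whatever the current state. This event has a probability p > 0 independent of the
  state (take m with P(\<xi> \<ge> m) > 0 and P(\<xi> \<le> m) > 0), so the transition kernel splits as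
  K(y, -) = L + R(y, -) with a fixed measure L of mass p: a Doeblin condition. Then
  \<nu> = \<Sum>_k L R^k is invariant, the law after t steps is \<nu>_0 R^t + \<Sum>_{k<t} L R^k, and comparing
  the two bounds the total variation distance by (1 - p)^t, which also gives uniqueness.
\<close>

section \<open>Doeblin splitting of a Markov kernel\<close>

lemma nn_integral_measure_sum:
  fixes \<gamma> :: "'i \<Rightarrow> 'b measure"
  assumes sets_\<alpha>: "sets \<alpha> = sets S" and sets_\<gamma>: "\<And>i. i \<in> I \<Longrightarrow> sets (\<gamma> i) = sets S"
    and I: "finite I"
    and eq: "\<And>A. A \<in> sets S \<Longrightarrow> emeasure \<alpha> A = (\<Sum>i\<in>I. emeasure (\<gamma> i) A)"
    and f: "f \<in> borel_measurable S"
  shows "(\<integral>\<^sup>+x. f x \<partial>\<alpha>) = (\<Sum>i\<in>I. \<integral>\<^sup>+x. f x \<partial>\<gamma> i)"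
  using f
proof (induct f rule: borel_measurable_induct)
  case (cong f g)
  have "(\<integral>\<^sup>+x. f x \<partial>\<alpha>) = (\<integral>\<^sup>+x. g x \<partial>\<alpha>)"
    by (rule nn_integral_cong) (use cong sets_eq_imp_space_eq[OF sets_\<alpha>] in auto)
  moreover have "(\<integral>\<^sup>+x. f x \<partial>\<gamma> i) = (\<integral>\<^sup>+x. g x \<partial>\<gamma> i)" if "i \<in> I" for i
    by (rule nn_integral_cong) (use cong sets_eq_imp_space_eq[OF sets_\<gamma>[OF that]] in auto)
  ultimately show ?case using cong by simp
next
  case (set A)
  then show ?case using sets_\<alpha> sets_\<gamma> eq by (simp cong: sum.cong)
next
  case (mult u c)
  have "u \<in> borel_measurable \<alpha>" "\<And>i. i \<in> I \<Longrightarrow> u \<in> borel_measurable (\<gamma> i)"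
    using mult sets_\<alpha> sets_\<gamma> by (simp_all cong: measurable_cong_sets)
  with mult show ?case by (simp add: nn_integral_cmult sum_distrib_left)
next
  case (add u v)
  have "u \<in> borel_measurable \<alpha>" "\<And>i. i \<in> I \<Longrightarrow> u \<in> borel_measurable (\<gamma> i)"
     "v \<in> borel_measurable \<alpha>" "\<And>i. i \<in> I \<Longrightarrow> v \<in> borel_measurable (\<gamma> i)"
    using add sets_\<alpha> sets_\<gamma> by (simp_all cong: measurable_cong_sets)
  with add show ?case by (simp add: nn_integral_add sum.distrib)
next
  case (seq U)
  have meas: "\<And>k. U k \<in> borel_measurable \<alpha>" "\<And>i k. i \<in> I \<Longrightarrow> U k \<in> borel_measurable (\<gamma> i)"
    using seq sets_\<alpha> sets_\<gamma> by (simp_all cong: measurable_cong_sets)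
  have "(\<integral>\<^sup>+x. (SUP k. U k) x \<partial>\<alpha>) = (SUP k. \<integral>\<^sup>+x. U k x \<partial>\<alpha>)"
    unfolding SUP_apply by (rule nn_integral_monotone_convergence_SUP[OF _ meas(1)]) (use seq in auto)
  also have "\<dots> = (SUP k. \<Sum>i\<in>I. \<integral>\<^sup>+x. U k x \<partial>\<gamma> i)" using seq by simp
  also have "\<dots> = (\<Sum>i\<in>I. SUP k. \<integral>\<^sup>+x. U k x \<partial>\<gamma> i)"
    using seq(4) by (intro ennreal_SUP_sum) (auto simp: incseq_def le_fun_def intro!: nn_integral_mono)
  also have "\<dots> = (\<Sum>i\<in>I. \<integral>\<^sup>+x. (SUP k. U k) x \<partial>\<gamma> i)"
    unfolding SUP_apply using meas(2) seq
    by (intro sum.cong refl nn_integral_monotone_convergence_SUP[symmetric]) auto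
  finally show ?case .
qed

lemma renewal_sum_dist_le:
  fixes a :: "nat \<Rightarrow> real"
  assumes p: "0 < p" "p \<le> 1" and a: "a sums s" "\<And>k. 0 \<le> a k" "\<And>k. a k \<le> p * (1 - p) ^ k"
    and r: "0 \<le> r" "r \<le> (1 - p) ^ t"
  shows "\<bar>r + (\<Sum>k<t. a k) - s\<bar> \<le> (1 - p) ^ t"
proof -
  have q: "norm (1 - p) < 1" using p by simp
  have geom: "(\<lambda>k. (1 - p) ^ t * (p * (1 - p) ^ k)) sums ((1 - p) ^ t * (p * (1 / (1 - (1 - p)))))"
    by (intro sums_mult geometric_sums q)
  have tail: "(\<lambda>k. a (k + t)) sums (s - (\<Sum>k<t. a k))"
    using a(1) by (simp add: sums_iff_shift)
  have "a (k + t) \<le> (1 - p) ^ t * (p * (1 - p) ^ k)" for k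
    using a(3)[of "k + t"] by (simp add: power_add ac_simps)
  then have "s - (\<Sum>k<t. a k) \<le> (1 - p) ^ t"
    using sums_le[OF _ tail geom] p by simp
  moreover have "0 \<le> s - (\<Sum>k<t. a k)"
    using a(2) by (rule sums_le[OF _ sums_zero tail])
  ultimately show ?thesis using r by (simp add: abs_le_iff)
qed

locale kernel_splitting =
  fixes S :: "'s measure" and D :: "'s set" and p :: real
    and K R :: "'s \<Rightarrow> 's measure" and L :: "'s measure"
  assumes sets_D: "D \<in> sets S"
    and p_pos: "0 < p" and p_le_1: "p \<le> 1"
    and sets_L: "sets L = sets S"
    and emeasure_L_space: "emeasure L (space S) = ennreal p"
    and L_outside_D: "emeasure L (space S - D) = 0"
    and R_measurable: "R \<in> measurable S (subprob_algebra S)"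
    and emeasure_R_space: "\<And>y. y \<in> space S \<Longrightarrow> emeasure (R y) (space S) = ennreal (1 - p)"
    and R_outside_D: "\<And>y. y \<in> space S \<Longrightarrow> emeasure (R y) (space S - D) = 0"
    and K_split: "\<And>y A. y \<in> D \<Longrightarrow> A \<in> sets S \<Longrightarrow> emeasure (K y) A = emeasure L A + emeasure (R y) A"
begin

lemma space_S_ne: "space S \<noteq> {}"
  using emeasure_L_space p_pos by auto

lemma sets_R: "y \<in> space S \<Longrightarrow> sets (R y) = sets S"
  using measurable_space[OF R_measurable] by (simp add: space_subprob_algebra)

lemma R_measurable_cong: "sets \<mu> = sets S \<Longrightarrow> R \<in> measurable \<mu> (subprob_algebra S)"
  using R_measurable by (simp cong: measurable_cong_sets)

lemma emeasure_R_measurable: "A \<in> sets S \<Longrightarrow> (\<lambda>y. emeasure (R y) A) \<in> borel_measurable S"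
  using measurable_compose[OF R_measurable measurable_emeasure_subprob_algebra] by blast

definition R_iter :: "'s measure \<Rightarrow> nat \<Rightarrow> 's measure" where
  "R_iter \<mu> k = ((\<lambda>m. m \<bind> R) ^^ k) \<mu>"

lemma R_iter_0 [simp]: "R_iter \<mu> 0 = \<mu>"
  by (simp add: R_iter_def)

lemma R_iter_Suc: "R_iter \<mu> (Suc k) = R_iter \<mu> k \<bind> R"
  by (simp add: R_iter_def)

lemma sets_R_iter: "sets \<mu> = sets S \<Longrightarrow> sets (R_iter \<mu> k) = sets S"
proof (induction k)
  case (Suc k)
  show ?case
    unfolding R_iter_Suc
    by (rule sets_bind) (use sets_eq_imp_space_eq[OF Suc.IH[OF Suc.prems]] space_S_ne sets_R in auto)
qed simp

lemma emeasure_R_iter_Suc: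
  assumes "sets \<mu> = sets S" "A \<in> sets S"
  shows "emeasure (R_iter \<mu> (Suc k)) A = (\<integral>\<^sup>+y. emeasure (R y) A \<partial>R_iter \<mu> k)"
  using assms sets_eq_imp_space_eq[OF sets_R_iter[OF assms(1)]] space_S_ne
  by (simp add: R_iter_Suc emeasure_bind[OF _ R_measurable_cong] sets_R_iter)

lemma emeasure_R_iter_space:
  assumes "sets \<mu> = sets S"
  shows "emeasure (R_iter \<mu> k) (space S) = emeasure \<mu> (space S) * ennreal ((1 - p) ^ k)"
proof (induction k)
  case (Suc k)
  have "emeasure (R_iter \<mu> (Suc k)) (space S) = (\<integral>\<^sup>+y. emeasure (R y) (space S) \<partial>R_iter \<mu> k)"
    using assms by (simp add: emeasure_R_iter_Suc)
  also have "\<dots> = (\<integral>\<^sup>+y. ennreal (1 - p) \<partial>R_iter \<mu> k)"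
    using sets_eq_imp_space_eq[OF sets_R_iter[OF assms]]
    by (intro nn_integral_cong) (simp add: emeasure_R_space)
  also have "\<dots> = emeasure \<mu> (space S) * ennreal ((1 - p) ^ Suc k)"
    using Suc sets_eq_imp_space_eq[OF sets_R_iter[OF assms]] p_le_1
    by (simp add: ennreal_mult mult_ac)
  finally show ?case .
qed simp

lemma R_iter_outside_D:
  assumes "sets \<mu> = sets S" "emeasure \<mu> (space S - D) = 0"
  shows "emeasure (R_iter \<mu> k) (space S - D) = 0"
proof (cases k)
  case (Suc k)
  then show ?thesis
    using assms sets_D sets_eq_imp_space_eq[OF sets_R_iter[OF assms(1)]]
    by (auto simp: emeasure_R_iter_Suc R_outside_D intro!: nn_integral_zero')
qed (use assms in simp)

lemma subprob_space_R_iter: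
  assumes "sets \<mu> = sets S" "emeasure \<mu> (space S) \<le> 1"
  shows "subprob_space (R_iter \<mu> k)"
proof (rule subprob_spaceI)
  have "ennreal ((1 - p) ^ k) \<le> 1"
    using p_pos p_le_1 by (simp add: power_le_one)
  then show "emeasure (R_iter \<mu> k) (space (R_iter \<mu> k)) \<le> 1"
    using assms mult_mono[OF assms(2) \<open>ennreal ((1 - p) ^ k) \<le> 1\<close>]
    by (simp add: sets_eq_imp_space_eq[OF sets_R_iter[OF assms(1)]] emeasure_R_iter_space)
qed (simp add: sets_eq_imp_space_eq[OF sets_R_iter[OF assms(1)]] space_S_ne)

lemma nn_integral_emeasure_K:
  assumes "sets Q = sets S" "emeasure Q (space S - D) = 0" "A \<in> sets S"
  shows "(\<integral>\<^sup>+y. emeasure (K y) A \<partial>Q) = emeasure L A * emeasure Q (space S) + (\<integral>\<^sup>+y. emeasure (R y) A \<partial>Q)"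
proof -
  have "AE y in Q. y \<in> D"
    using assms(1,2) sets_D by (intro AE_I'[of "space S - D"]) (auto dest: sets_eq_imp_space_eq)
  then have "(\<integral>\<^sup>+y. emeasure (K y) A \<partial>Q) = (\<integral>\<^sup>+y. emeasure L A + emeasure (R y) A \<partial>Q)"
    by (rule nn_integral_cong_AE[OF AE_mp]) (use K_split[OF _ assms(3)] in auto)
  also have "\<dots> = (\<integral>\<^sup>+y. emeasure L A \<partial>Q) + (\<integral>\<^sup>+y. emeasure (R y) A \<partial>Q)"
    using emeasure_R_measurable[OF assms(3)] assms(1)
    by (intro nn_integral_add) (simp_all cong: measurable_cong_sets)
  finally show ?thesis using sets_eq_imp_space_eq[OF assms(1)] by simp
qed

definition stationary :: "'s measure" where
  "stationary = count_space UNIV \<bind> R_iter L"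

lemma subprob_space_R_iter_L: "subprob_space (R_iter L k)"
  using p_le_1 by (intro subprob_space_R_iter) (simp_all add: sets_L emeasure_L_space)

lemma R_iter_L_measurable: "R_iter L \<in> measurable (count_space UNIV) (subprob_algebra S)"
  by (auto simp: space_subprob_algebra subprob_space_R_iter_L sets_R_iter sets_L)

lemma sets_stationary: "sets stationary = sets S"
  unfolding stationary_def by (rule sets_bind) (auto simp: sets_R_iter sets_L)

lemma emeasure_stationary: "A \<in> sets S \<Longrightarrow> emeasure stationary A = (\<Sum>k. emeasure (R_iter L k) A)"
  unfolding stationary_def
  by (subst emeasure_bind[OF _ R_iter_L_measurable]) (auto simp: nn_integral_count_space_nat)

lemma emeasure_R_iter_L_space: "emeasure (R_iter L k) (space S) = ennreal (p * (1 - p) ^ k)"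
  using p_pos p_le_1 by (simp add: emeasure_R_iter_space sets_L emeasure_L_space ennreal_mult)

lemma prob_space_stationary: "prob_space stationary"
proof (rule prob_spaceI)
  have q: "norm (1 - p) < 1" using p_pos p_le_1 by simp
  have "emeasure stationary (space S) = (\<Sum>k. ennreal (p * (1 - p) ^ k))"
    by (simp add: emeasure_stationary emeasure_R_iter_L_space)
  also have "\<dots> = ennreal (\<Sum>k. p * (1 - p) ^ k)"
    using p_pos p_le_1 by (intro suminf_ennreal2 summable_mult summable_geometric[OF q]) auto
  also have "(\<Sum>k. p * (1 - p) ^ k) = 1"
    using suminf_mult[OF summable_geometric[OF q]] suminf_geometric[OF q] p_pos by simp
  finally show "emeasure stationary (space stationary) = 1"
    by (simp add: sets_eq_imp_space_eq[OF sets_stationary])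
qed

lemma stationary_outside_D: "emeasure stationary (space S - D) = 0"
  using sets_D by (simp add: emeasure_stationary R_iter_outside_D sets_L L_outside_D)

lemma stationary_invariant:
  assumes A: "A \<in> sets S"
  shows "emeasure stationary A = (\<integral>\<^sup>+y. emeasure (K y) A \<partial>stationary)"
proof -
  have "(\<integral>\<^sup>+y. emeasure (R y) A \<partial>stationary) = (\<Sum>k. emeasure (R_iter L (Suc k)) A)"
    unfolding stationary_def
    using A by (simp add: nn_integral_bind[OF emeasure_R_measurable R_iter_L_measurable]
        nn_integral_count_space_nat emeasure_R_iter_Suc sets_L)
  then have "(\<integral>\<^sup>+y. emeasure (K y) A \<partial>stationary) = emeasure L A + (\<Sum>k. emeasure (R_iter L (Suc k)) A)"
    using A prob_space.emeasure_space_1[OF prob_space_stationary]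
    by (simp add: nn_integral_emeasure_K sets_stationary stationary_outside_D
        sets_eq_imp_space_eq[OF sets_stationary])
  also have "\<dots> = (\<Sum>k. emeasure (R_iter L k) A)"
    using sums_Suc[OF summable_sums[OF summableI], of "\<lambda>k. emeasure (R_iter L k) A"]
    by (simp add: sums_iff add.commute)
  finally show ?thesis using A by (simp add: emeasure_stationary)
qed

lemma emeasure_chain_decomposition:
  assumes sets_\<alpha>: "\<And>t. sets (\<alpha> t) = sets S" and prob_\<alpha>: "\<And>t. prob_space (\<alpha> t)"
    and \<alpha>_outside_D: "\<And>t. emeasure (\<alpha> t) (space S - D) = 0"
    and \<alpha>_step: "\<And>t A. A \<in> sets S \<Longrightarrow> emeasure (\<alpha> (Suc t)) A = (\<integral>\<^sup>+y. emeasure (K y) A \<partial>\<alpha> t)"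
    and A: "A \<in> sets S"
  shows "emeasure (\<alpha> t) A = emeasure (R_iter (\<alpha> 0) t) A + (\<Sum>k<t. emeasure (R_iter L k) A)"
  using A
proof (induction t arbitrary: A)
  case (Suc t)
  define \<gamma> where "\<gamma> k = (if k = t then R_iter (\<alpha> 0) t else R_iter L k)" for k
  have sets_\<gamma>: "sets (\<gamma> k) = sets S" for k
    by (simp add: \<gamma>_def sets_R_iter sets_\<alpha> sets_L)
  have \<alpha>_t: "emeasure (\<alpha> t) B = (\<Sum>k<Suc t. emeasure (\<gamma> k) B)" if "B \<in> sets S" for B
    using Suc.IH[OF that] by (simp add: \<gamma>_def add.commute)
  have "(\<integral>\<^sup>+y. emeasure (R y) A \<partial>\<alpha> t) = (\<Sum>k<Suc t. \<integral>\<^sup>+y. emeasure (R y) A \<partial>\<gamma> k)"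
    by (rule nn_integral_measure_sum[OF sets_\<alpha> sets_\<gamma> _ \<alpha>_t emeasure_R_measurable[OF Suc.prems]]) auto
  also have "\<dots> = emeasure (R_iter (\<alpha> 0) (Suc t)) A + (\<Sum>k<t. emeasure (R_iter L (Suc k)) A)"
    using Suc.prems by (simp add: \<gamma>_def emeasure_R_iter_Suc sets_\<alpha> sets_L)
  finally show ?case
    using Suc.prems prob_space.emeasure_space_1[OF prob_\<alpha>] sets_eq_imp_space_eq[OF sets_\<alpha>]
    by (simp add: \<alpha>_step nn_integral_emeasure_K sets_\<alpha> \<alpha>_outside_D sum.lessThan_Suc_shift
        ac_simps del: sum.lessThan_Suc)
qed simp

lemma measure_R_iter_le:
  assumes "sets \<mu> = sets S" "emeasure \<mu> (space S) = ennreal c" "0 \<le> c" "c \<le> 1"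
  shows "measure (R_iter \<mu> k) A \<le> c * (1 - p) ^ k"
proof -
  interpret subprob_space "R_iter \<mu> k"
    using assms by (intro subprob_space_R_iter) auto
  have "measure (R_iter \<mu> k) A \<le> measure (R_iter \<mu> k) (space S)"
    using bounded_measure sets_eq_imp_space_eq[OF sets_R_iter[OF assms(1)]] by simp
  also have "\<dots> = c * (1 - p) ^ k"
    using assms p_le_1 by (simp add: measure_def emeasure_R_iter_space ennreal_mult[symmetric])
  finally show ?thesis .
qed

lemma measure_R_iter_L_le: "measure (R_iter L k) A \<le> p * (1 - p) ^ k"
  using p_pos p_le_1 by (intro measure_R_iter_le) (simp_all add: sets_L emeasure_L_space)

lemma emeasure_R_iter_eq_measure:
  assumes "sets \<mu> = sets S" "emeasure \<mu> (space S) \<le> 1"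
  shows "emeasure (R_iter \<mu> k) A = ennreal (measure (R_iter \<mu> k) A)"
  using subprob_space_R_iter[OF assms]
  by (simp add: subprob_space.emeasure_subprob_space_less_top emeasure_eq_ennreal_measure)

lemma measure_stationary_sums: "A \<in> sets S \<Longrightarrow> (\<lambda>k. measure (R_iter L k) A) sums measure stationary A"
proof -
  assume A: "A \<in> sets S"
  have L: "sets L = sets S" "emeasure L (space S) \<le> 1"
    using p_le_1 by (simp_all add: sets_L emeasure_L_space)
  have summable: "summable (\<lambda>k. measure (R_iter L k) A)"
    using p_pos p_le_1 measure_R_iter_L_le
    by (intro summable_comparison_test'[OF summable_mult[OF summable_geometric]]) auto
  have "emeasure stationary A = ennreal (\<Sum>k. measure (R_iter L k) A)"
    using A summable
    by (simp add: emeasure_stationary emeasure_R_iter_eq_measure[OF L] suminf_ennreal2)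
  then have "measure stationary A = (\<Sum>k. measure (R_iter L k) A)"
    using summable by (simp add: measure_def suminf_nonneg)
  with summable show ?thesis by (simp add: sums_iff)
qed

lemma measure_chain_decomposition:
  assumes sets_\<alpha>: "\<And>t. sets (\<alpha> t) = sets S" and prob_\<alpha>: "\<And>t. prob_space (\<alpha> t)"
    and \<alpha>_outside_D: "\<And>t. emeasure (\<alpha> t) (space S - D) = 0"
    and \<alpha>_step: "\<And>t A. A \<in> sets S \<Longrightarrow> emeasure (\<alpha> (Suc t)) A = (\<integral>\<^sup>+y. emeasure (K y) A \<partial>\<alpha> t)"
    and A: "A \<in> sets S"
  shows "measure (\<alpha> t) A = measure (R_iter (\<alpha> 0) t) A + (\<Sum>k<t. measure (R_iter L k) A)"
proof -
  have L: "sets L = sets S" "emeasure L (space S) \<le> 1"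
    using p_le_1 by (simp_all add: sets_L emeasure_L_space)
  have \<alpha>_0: "sets (\<alpha> 0) = sets S" "emeasure (\<alpha> 0) (space S) \<le> 1"
    using prob_space.emeasure_space_1[OF prob_\<alpha>] sets_eq_imp_space_eq[OF sets_\<alpha>]
    by (simp_all add: sets_\<alpha>)
  have "emeasure (\<alpha> t) A = ennreal (measure (R_iter (\<alpha> 0) t) A + (\<Sum>k<t. measure (R_iter L k) A))"
    using emeasure_chain_decomposition[where \<alpha>=\<alpha>, OF assms]
    by (simp add: emeasure_R_iter_eq_measure[OF L] emeasure_R_iter_eq_measure[OF \<alpha>_0]
        ennreal_plus sum_nonneg)
  then show ?thesis
    by (simp only: measure_def[of "\<alpha> t"] enn2real_ennreal add_nonneg_nonneg sum_nonneg measure_nonneg)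
qed

lemma chain_dist_stationary_le:
  assumes sets_\<alpha>: "\<And>t. sets (\<alpha> t) = sets S" and prob_\<alpha>: "\<And>t. prob_space (\<alpha> t)"
    and \<alpha>_outside_D: "\<And>t. emeasure (\<alpha> t) (space S - D) = 0"
    and \<alpha>_step: "\<And>t A. A \<in> sets S \<Longrightarrow> emeasure (\<alpha> (Suc t)) A = (\<integral>\<^sup>+y. emeasure (K y) A \<partial>\<alpha> t)"
    and A: "A \<in> sets S"
  shows "\<bar>measure (\<alpha> t) A - measure stationary A\<bar> \<le> (1 - p) ^ t"
proof -
  have "emeasure (\<alpha> 0) (space S) = ennreal 1"
    using prob_space.emeasure_space_1[OF prob_\<alpha>] sets_eq_imp_space_eq[OF sets_\<alpha>] by simp
  then have "measure (R_iter (\<alpha> 0) t) A \<le> (1 - p) ^ t"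
    using measure_R_iter_le[OF sets_\<alpha>] by fastforce
  moreover have "measure (\<alpha> t) A = measure (R_iter (\<alpha> 0) t) A + (\<Sum>k<t. measure (R_iter L k) A)"
    by (rule measure_chain_decomposition[where \<alpha>=\<alpha>, OF assms])
  ultimately show ?thesis
    using renewal_sum_dist_le[OF p_pos p_le_1 measure_stationary_sums[OF A] _ measure_R_iter_L_le] by simp
qed

lemma invariant_eq_stationary:
  assumes sets_\<nu>: "sets \<nu> = sets S" and prob_\<nu>: "prob_space \<nu>"
    and \<nu>_outside_D: "emeasure \<nu> (space S - D) = 0"
    and \<nu>_invariant: "\<And>A. A \<in> sets S \<Longrightarrow> emeasure \<nu> A = (\<integral>\<^sup>+y. emeasure (K y) A \<partial>\<nu>)"
  shows "\<nu> = stationary"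
proof (rule measure_eqI)
  interpret \<nu>: prob_space \<nu> by (rule prob_\<nu>)
  interpret stationary: prob_space stationary by (rule prob_space_stationary)
  show "sets \<nu> = sets stationary" by (simp add: sets_\<nu> sets_stationary)
  fix A assume "A \<in> sets \<nu>"
  then have A: "A \<in> sets S" using sets_\<nu> by simp
  have "(\<lambda>t. (1 - p) ^ t) \<longlonglongrightarrow> 0"
    using p_pos p_le_1 by (intro LIMSEQ_power_zero) auto
  then have "\<bar>measure \<nu> A - measure stationary A\<bar> \<le> 0"
    using chain_dist_stationary_le[where \<alpha>="\<lambda>_. \<nu>", OF assms A]
    by (intro LIMSEQ_le_const) auto
  then show "emeasure \<nu> A = emeasure stationary A"
    by (simp add: \<nu>.emeasure_eq_measure stationary.emeasure_eq_measure)
qed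

end

section \<open>The max-plus dynamics\<close>

lemma space_stateM: "space (stateM N) = PiE {..<N} (\<lambda>_. UNIV)"
  by (simp add: stateM_def space_PiM)

lemma measurable_component_stateM [measurable]: "j < N \<Longrightarrow> (\<lambda>y. y j) \<in> borel_measurable (stateM N)"
  unfolding stateM_def by (rule measurable_component_singleton) auto

lemma measurable_restrict_stateM:
  assumes "\<And>k. k < N \<Longrightarrow> (\<lambda>x. g x k) \<in> borel_measurable L"
  shows "(\<lambda>x. \<lambda>k\<in>{..<N}. g x k) \<in> measurable L (stateM N)"
  unfolding stateM_def by (rule measurable_restrict) (use assms in auto)

lemma sets_Delta [measurable]:
  assumes "0 < N" shows "Delta N \<in> sets (stateM N)"
proof -
  have "Delta N = space (stateM N) \<inter> (\<Inter>i<N. \<Inter>j<N. {y \<in> space (stateM N). i \<le> j \<longrightarrow> y j \<le> y i})"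
    by (auto simp: Delta_def)
  also have "\<dots> \<in> sets (stateM N)"
  proof (intro sets.Int sets.top sets.finite_INT)
    fix i j assume "i \<in> {..<N}" "j \<in> {..<N}"
    then have [measurable]: "i < N" "j < N" by auto
    show "{y \<in> space (stateM N). i \<le> j \<longrightarrow> y j \<le> y i} \<in> sets (stateM N)"
      by (cases "i \<le> j") simp_all
  qed (use assms in auto)
  finally show ?thesis .
qed

lemma sets_Delta0 [measurable]:
  assumes "0 < N" shows "Delta0 N \<in> sets (stateM N)"
proof -
  have "Delta0 N = Delta N \<inter> {y \<in> space (stateM N). y 0 = 0}"
    by (auto simp: Delta0_def Delta_def)
  also have "\<dots> \<in> sets (stateM N)"
    using assms by measurable
  finally show ?thesis .
qed

lemma Delta0_subset_Delta: "Delta0 N \<subseteq> Delta N"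
  by (auto simp: Delta0_def)

lemma Delta_le_leading: "y \<in> Delta N \<Longrightarrow> j < N \<Longrightarrow> y j \<le> y 0"
  unfolding Delta_def using le0 by blast

lemma rev_sort_nth_le_iff:
  fixes xs :: "'a::linorder list"
  assumes k: "k < length xs"
  shows "rev (sort xs) ! k \<le> a \<longleftrightarrow> card {i. i < length xs \<and> a < xs ! i} \<le> k"
proof -
  let ?ys = "rev (sort xs)"
  have desc: "?ys ! j \<le> ?ys ! i" if "i \<le> j" "j < length xs" for i j
    using that by (simp add: rev_nth sorted_nth_mono)
  have "length (filter ((<) a) xs) = length (filter ((<) a) ?ys)"
    by (metis mset_filter size_mset mset_rev mset_sort)
  then have count: "card {i. i < length xs \<and> a < xs ! i} = card {i. i < length xs \<and> a < ?ys ! i}"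
    by (simp add: length_filter_conv_card)
  show ?thesis
  proof
    assume "?ys ! k \<le> a"
    then have "{i. i < length xs \<and> a < ?ys ! i} \<subseteq> {..<k}"
    proof (intro subsetI CollectI)
      fix i assume i: "i \<in> {i. i < length xs \<and> a < ?ys ! i}"
      show "i \<in> {..<k}"
      proof (rule ccontr)
        assume "i \<notin> {..<k}"
        then have "?ys ! i \<le> ?ys ! k" using desc i by simp
        then show False using i \<open>?ys ! k \<le> a\<close> by (simp add: leD order.trans)
      qed
    qed
    then show "card {i. i < length xs \<and> a < xs ! i} \<le> k"
      unfolding count by (metis card_lessThan card_mono finite_lessThan)
  next
    assume le: "card {i. i < length xs \<and> a < xs ! i} \<le> k"
    show "?ys ! k \<le> a"
    proof (rule ccontr)
      assume "\<not> ?ys ! k \<le> a"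
      then have "a < ?ys ! i" if "i \<le> k" for i
        using desc[OF that k] by (simp add: not_le less_le_trans)
      then have "{..k} \<subseteq> {i. i < length xs \<and> a < ?ys ! i}"
        using k by auto
      then have "card {..k} \<le> card {i. i < length xs \<and> a < ?ys ! i}"
        by (rule card_mono[rotated]) auto
      then show False using le count by simp
    qed
  qed
qed

lemma borel_measurable_rev_sort_nth:
  fixes f :: "nat \<Rightarrow> 'a \<Rightarrow> real"
  assumes f: "\<And>i. i < n \<Longrightarrow> f i \<in> borel_measurable M" and k: "k < n"
  shows "(\<lambda>\<omega>. rev (sort (map (\<lambda>i. f i \<omega>) [0..<n])) ! k) \<in> borel_measurable M"
proof (subst borel_measurable_iff_le, intro allI)
  fix a :: real
  have count: "(\<lambda>\<omega>. \<Sum>i<n. of_bool (a < f i \<omega>) :: real) \<in> borel_measurable M"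
    using f by (intro borel_measurable_sum) (auto simp: of_bool_def)
  have "{i. i < n \<and> a < map (\<lambda>i. f i \<omega>) [0..<n] ! i} = {..<n} \<inter> {i. a < f i \<omega>}" for \<omega>
    by auto
  then have "{\<omega> \<in> space M. rev (sort (map (\<lambda>i. f i \<omega>) [0..<n])) ! k \<le> a}
      = {\<omega> \<in> space M. (\<Sum>i<n. of_bool (a < f i \<omega>) :: real) \<le> real k}"
    using k by (auto simp: rev_sort_nth_le_iff)
  also have "\<dots> \<in> sets M" using count by measurable
  finally show "{\<omega> \<in> space M. rev (sort (map (\<lambda>i. f i \<omega>) [0..<n])) ! k \<le> a} \<in> sets M" .
qed

lemma sort_map_add_const:
  "sort (map (\<lambda>a. a + c) xs) = map (\<lambda>a. a + (c::'a::linordered_ab_group_add)) (sort xs)"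
  by (rule properties_for_sort) (simp_all add: sorted_map)

lemma ord_desc_add_const:
  assumes "\<And>i. i < N \<Longrightarrow> v' i = v i + c" "k < N"
  shows "ord_desc N v' k = ord_desc N v k + c"
proof -
  have "map v' [0..<N] = map (\<lambda>a. a + c) (map v [0..<N])"
    using assms(1) by simp
  then show ?thesis
    using assms(2) by (simp add: ord_desc_def sort_map_add_const rev_map del: map_map)
qed

lemma ord_desc_in_Delta: "ord_desc N v \<in> Delta N"
proof -
  have "rev (sort xs) ! j \<le> rev (sort xs) ! i" if "i \<le> j" "j < length xs" for i j and xs :: "real list"
    using that by (simp add: rev_nth sorted_nth_mono)
  then show ?thesis
    by (auto simp: Delta_def ord_desc_def space_stateM)
qed

lemma shift0_add_const:
  assumes "\<And>i. i < N \<Longrightarrow> w' i = w i + c" "0 < N"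
  shows "shift0 N w' = shift0 N w"
  using assms unfolding shift0_def by (auto intro!: restrict_ext)

lemma shift0_in_Delta0: "y \<in> Delta N \<Longrightarrow> 0 < N \<Longrightarrow> shift0 N y \<in> Delta0 N"
  by (auto simp: Delta0_def Delta_def shift0_def space_stateM)

lemma shift0_measurable:
  assumes "0 < N" shows "shift0 N \<in> measurable (stateM N) (stateM N)"
  unfolding shift0_def[abs_def] by (rule measurable_restrict_stateM) (use assms in measurable)

lemma step_cong:
  assumes "\<And>i j. i < N \<Longrightarrow> j < N \<Longrightarrow> x i j = x' i j" "\<And>j. j < N \<Longrightarrow> y j = y' j"
  shows "step N y x = step N y' x'"
proof -
  have "(\<lambda>j. y j + x i j) ` {..<N} = (\<lambda>j. y' j + x' i j) ` {..<N}" if "i < N" for i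
    using assms that by auto
  then have rows: "map (\<lambda>i. Max ((\<lambda>j. y j + x i j) ` {..<N})) [0..<N]
      = map (\<lambda>i. Max ((\<lambda>j. y' j + x' i j) ` {..<N})) [0..<N]"
    by simp
  show ?thesis unfolding step_def ord_desc_def rows ..
qed

lemma step_in_Delta: "step N y x \<in> Delta N"
  unfolding step_def by (rule ord_desc_in_Delta)

lemma shift0_step_add_const:
  assumes "\<And>j. j < N \<Longrightarrow> y' j = y j + c" "0 < N"
  shows "shift0 N (step N y' x) = shift0 N (step N y x)"
proof (rule shift0_add_const[OF _ assms(2)])
  fix k assume "k < N"
  have "Max ((\<lambda>j. y' j + x i j) ` {..<N}) = Max ((\<lambda>j. y j + x i j) ` {..<N}) + c" for i
  proof -
    have "(\<lambda>j. y' j + x i j) ` {..<N} = (\<lambda>j. (y j + x i j) + c) ` {..<N}"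
      using assms(1) by (auto simp: algebra_simps)
    then show ?thesis
      using Max_add_commute[of "{..<N}" "\<lambda>j. y j + x i j" c] assms(2) by fastforce
  qed
  then show "step N y' x k = step N y x k + c"
    unfolding step_def using \<open>k < N\<close> by (intro ord_desc_add_const) auto
qed

lemma shift0_step_shift0: "0 < N \<Longrightarrow> shift0 N (step N (shift0 N y) x) = shift0 N (step N y x)"
  by (rule shift0_step_add_const[where c="- y 0"]) (auto simp: shift0_def)

text \<open>Every row maximum is attained at column 0, by the leading coordinate.\<close>
lemma shift0_step_col0_max:
  assumes "\<And>j. j < N \<Longrightarrow> y j \<le> y 0" "0 < N" "\<And>i j. i < N \<Longrightarrow> j < N \<Longrightarrow> x i j \<le> x i 0"
  shows "shift0 N (step N y x) = shift0 N (ord_desc N (\<lambda>i. x i 0))"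
  unfolding step_def
proof (rule shift0_add_const[OF _ assms(2)], rule ord_desc_add_const[where c="y 0"])
  fix i assume i: "i < N"
  have le: "y j + x i j \<le> x i 0 + y 0" if "j < N" for j
    using assms(1)[OF that] assms(3)[OF i that] by simp
  show "Max ((\<lambda>j. y j + x i j) ` {..<N}) = x i 0 + y 0"
  proof (rule Max_eqI)
    show "x i 0 + y 0 \<in> (\<lambda>j. y j + x i j) ` {..<N}"
      using assms(2) by (auto intro!: image_eqI[of _ _ 0])
  qed (use le in auto)
qed

definition matM :: "nat \<Rightarrow> (nat \<times> nat \<Rightarrow> real) measure" where
  "matM N = PiM ({..<N} \<times> {..<N}) (\<lambda>_. borel)"

lemma measurable_entry_matM [measurable]:
  "i < N \<Longrightarrow> j < N \<Longrightarrow> (\<lambda>x. x (i, j)) \<in> borel_measurable (matM N)"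
  unfolding matM_def by (rule measurable_component_singleton) auto

definition step0 :: "nat \<Rightarrow> (nat \<Rightarrow> real) \<Rightarrow> (nat \<times> nat \<Rightarrow> real) \<Rightarrow> (nat \<Rightarrow> real)" where
  "step0 N y x = shift0 N (step N y (\<lambda>i j. x (i, j)))"

lemma step_measurable:
  "(\<lambda>(y, x). step N y (\<lambda>i j. x (i, j))) \<in> measurable (stateM N \<Otimes>\<^sub>M matM N) (stateM N)"
proof -
  have "(\<lambda>p. Max ((\<lambda>j. fst p j + snd p (i, j)) ` {..<N})) \<in> borel_measurable (stateM N \<Otimes>\<^sub>M matM N)"
    if "i < N" for i
    using that by (intro borel_measurable_Max) auto
  then have "(\<lambda>p. ord_desc N (\<lambda>i. Max ((\<lambda>j. fst p j + snd p (i, j)) ` {..<N})))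
      \<in> measurable (stateM N \<Otimes>\<^sub>M matM N) (stateM N)"
    unfolding ord_desc_def by (intro measurable_restrict_stateM borel_measurable_rev_sort_nth)
  then show ?thesis unfolding step_def by (simp add: case_prod_beta)
qed

lemma step0_measurable:
  "0 < N \<Longrightarrow> (\<lambda>(y, x). step0 N y x) \<in> measurable (stateM N \<Otimes>\<^sub>M matM N) (stateM N)"
  using measurable_comp[OF step_measurable shift0_measurable]
  by (simp add: step0_def comp_def case_prod_beta)

lemma step0_restrict: "step0 N (\<lambda>j\<in>{..<N}. y j) x = step0 N y x"
  unfolding step0_def by (rule arg_cong[where f="shift0 N"], rule step_cong) auto

lemma step0_measurable_noise:
  assumes "0 < N" shows "step0 N y \<in> measurable (matM N) (stateM N)"
proof -
  have "(\<lambda>j\<in>{..<N}. y j) \<in> space (stateM N)" by (simp add: space_stateM)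
  from measurable_Pair2[OF step0_measurable[OF assms] this] show ?thesis
    by (simp add: step0_restrict)
qed

lemma step0_in_Delta0: "0 < N \<Longrightarrow> step0 N y x \<in> Delta0 N"
  unfolding step0_def by (rule shift0_in_Delta0[OF step_in_Delta])

section \<open>The chain seen from the leading edge\<close>

lemma (in real_distribution) exists_both_tails_pos: "\<exists>m. 0 < prob {m..} \<and> 0 < prob {..m}"
proof -
  let ?U = "{x. 1/2 \<le> cdf M x}"
  define c where "c = Inf ?U" \<comment> \<open>a median\<close>
  have "\<forall>\<^sub>F x in at_top. 1/2 < cdf M x"
    using order_tendstoD(1)[OF cdf_lim_at_top_prob, of "1/2"] by simp
  then obtain u where "u \<in> ?U" by (auto simp: eventually_at_top_linorder intro: less_imp_le)
  then have U_ne: "?U \<noteq> {}" by blast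
  have "\<forall>\<^sub>F x in at_bot. cdf M x < 1/2"
    using order_tendstoD(2)[OF cdf_lim_at_bot, of "1/2"] by simp
  then obtain b where b: "\<And>x. x \<le> b \<Longrightarrow> cdf M x < 1/2" by (auto simp: eventually_at_bot_linorder)
  have bdd: "bdd_below ?U"
  proof (rule bdd_belowI)
    fix x assume "x \<in> ?U"
    then show "b \<le> x" using b[of x] by (cases "x \<le> b") auto
  qed
  have "1/2 \<le> cdf M c"
  proof (rule tendsto_lowerbound)
    show "(cdf M \<longlongrightarrow> cdf M c) (at_right c)"
      using cdf_is_right_cont by (simp add: continuous_within)
    show "\<forall>\<^sub>F x in at_right c. 1/2 \<le> cdf M x"
    proof (rule eventually_at_rightI[of c "c + 1"])
      fix x assume "x \<in> {c<..<c + 1}"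
      then obtain y where "y \<in> ?U" "y < x" using cInf_lessD[OF U_ne, of x] unfolding c_def by auto
      then show "1/2 \<le> cdf M x" using cdf_nondecreasing[of y x] by simp
    qed simp
  qed simp
  then have "0 < prob {..c}" by (simp add: cdf_def)
  have "prob {..<c} \<le> 1/2"
  proof (rule tendsto_upperbound[OF cdf_at_left])
    show "\<forall>\<^sub>F x in at_left c. cdf M x \<le> 1/2"
    proof (rule eventually_at_leftI[of "c - 1"])
      fix x assume "x \<in> {c - 1<..<c}"
      then have "x \<notin> ?U" using cInf_lower[OF _ bdd] unfolding c_def by force
      then show "cdf M x \<le> 1/2" by simp
    qed simp
  qed simp
  then have "0 < prob {c..}"
    using prob_compl[of "{..<c}"] by (simp add: Compl_eq_Diff_UNIV[symmetric] not_less atLeast_def)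
  with \<open>0 < prob {..c}\<close> show ?thesis by blast
qed

lemma
  assumes "\<And>A. A \<in> sets \<mu> \<Longrightarrow> \<bar>measure \<mu> A - measure \<nu> A\<bar> \<le> c"
  shows tv_dist_le: "tv_dist \<mu> \<nu> \<le> c" and tv_dist_nonneg: "0 \<le> tv_dist \<mu> \<nu>"
proof -
  show "tv_dist \<mu> \<nu> \<le> c"
    unfolding tv_dist_def using assms by (intro cSUP_least) auto
  have "bdd_above ((\<lambda>A. \<bar>measure \<mu> A - measure \<nu> A\<bar>) ` sets \<mu>)"
    using assms by (intro bdd_aboveI[of _ c]) auto
  then have "\<bar>measure \<mu> {} - measure \<nu> {}\<bar> \<le> tv_dist \<mu> \<nu>"
    unfolding tv_dist_def by (intro cSUP_upper) simp_all
  then show "0 \<le> tv_dist \<mu> \<nu>" by simp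
qed

text \<open>Unlike \<open>indep_var_compose\<close>, the two functions may take values in different types.\<close>
lemma (in prob_space) distr_Pair_indep_var_comp:
  assumes indep: "indep_var S X T Y" and f: "f \<in> measurable S S'" and g: "g \<in> measurable T T'"
  shows "distr M (S' \<Otimes>\<^sub>M T') (\<lambda>\<omega>. (f (X \<omega>), g (Y \<omega>)))
       = distr M S' (\<lambda>\<omega>. f (X \<omega>)) \<Otimes>\<^sub>M distr M T' (\<lambda>\<omega>. g (Y \<omega>))"
proof -
  have X: "random_variable S X" and Y: "random_variable T Y"
    and XY: "distr M S X \<Otimes>\<^sub>M distr M T Y = distr M (S \<Otimes>\<^sub>M T) (\<lambda>\<omega>. (X \<omega>, Y \<omega>))"
    using indep by (simp_all add: indep_var_distribution_eq)
  have f': "f \<in> measurable (distr M S X) S'" and g': "g \<in> measurable (distr M T Y) T'"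
    using f g by (simp_all cong: measurable_cong_sets)
  have "sigma_finite_measure (distr (distr M T Y) T' g)"
    using g' Y by (intro prob_space_imp_sigma_finite prob_space.prob_space_distr prob_space_distr)
  moreover have "distr M S' (\<lambda>\<omega>. f (X \<omega>)) = distr (distr M S X) S' f"
    "distr M T' (\<lambda>\<omega>. g (Y \<omega>)) = distr (distr M T Y) T' g"
    using f g X Y by (simp_all add: distr_distr comp_def)
  ultimately have "distr M S' (\<lambda>\<omega>. f (X \<omega>)) \<Otimes>\<^sub>M distr M T' (\<lambda>\<omega>. g (Y \<omega>))
      = distr (distr M (S \<Otimes>\<^sub>M T) (\<lambda>\<omega>. (X \<omega>, Y \<omega>))) (S' \<Otimes>\<^sub>M T') (\<lambda>(x, y). (f x, g y))"
    by (simp add: pair_measure_distr[OF f' g'] XY)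
  also have "\<dots> = distr M (S' \<Otimes>\<^sub>M T') (\<lambda>\<omega>. (f (X \<omega>), g (Y \<omega>)))"
    using f g X Y by (subst distr_distr) (auto simp: comp_def)
  finally show ?thesis ..
qed

lemma emeasure_distr_density_indicator:
  assumes "E \<in> sets \<mu>" "f \<in> measurable \<mu> S" "A \<in> sets S"
  shows "emeasure (distr (density \<mu> (indicator E)) S f) A = emeasure \<mu> (E \<inter> (f -` A \<inter> space \<mu>))"
  using assms by (simp add: emeasure_distr emeasure_restricted cong: measurable_cong_sets)

lemma (in prob_space) emeasure_eq_1_iff_compl_null:
  "A \<in> events \<Longrightarrow> emeasure M A = 1 \<longleftrightarrow> emeasure M (space M - A) = 0"
  by (simp add: emeasure_eq_measure prob_compl)

locale leading_edge_chain = prob_space M for M :: "'a measure" +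
  fixes N :: nat and \<xi> :: "nat \<Rightarrow> nat \<Rightarrow> nat \<Rightarrow> 'a \<Rightarrow> real"
  assumes N_pos: "0 < N"
    and indep: "indep_vars (\<lambda>_. borel) (\<lambda>(i, j, s). \<xi> i j s) {(i, j, s). i < N \<and> j < N \<and> s \<ge> 1}"
    and ident: "\<And>i j s. i < N \<Longrightarrow> j < N \<Longrightarrow> s \<ge> 1 \<Longrightarrow>
                  distr M borel (\<xi> i j s) = distr M borel (\<xi> 0 0 1)"
begin

definition noise :: "nat \<Rightarrow> 'a \<Rightarrow> (nat \<times> nat \<Rightarrow> real)" where
  "noise s \<omega> = (\<lambda>q\<in>{..<N} \<times> {..<N}. \<xi> (fst q) (snd q) s \<omega>)"

definition entry_law :: "real measure" where
  "entry_law = distr M borel (\<xi> 0 0 1)"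

definition noise_law :: "(nat \<times> nat \<Rightarrow> real) measure" where
  "noise_law = PiM ({..<N} \<times> {..<N}) (\<lambda>_. entry_law)"

lemma random_variable_\<xi>: "i < N \<Longrightarrow> j < N \<Longrightarrow> 1 \<le> s \<Longrightarrow> random_variable borel (\<xi> i j s)"
  using indep unfolding indep_vars_def by fastforce

lemma random_variable_noise: "1 \<le> s \<Longrightarrow> random_variable (matM N) (noise s)"
  unfolding noise_def matM_def by (rule measurable_restrict) (auto intro: random_variable_\<xi>)

lemma prob_space_entry_law: "prob_space entry_law"
  unfolding entry_law_def using N_pos by (intro prob_space_distr random_variable_\<xi>) auto

lemma sets_entry_law [simp]: "sets entry_law = sets borel"
  by (simp add: entry_law_def)

lemma sets_noise_law [measurable_cong]: "sets noise_law = sets (matM N)"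
  unfolding noise_law_def matM_def by (intro sets_PiM_cong) simp_all

lemma prob_space_noise_law: "prob_space noise_law"
  unfolding noise_law_def using prob_space_entry_law by (intro prob_space_PiM)

sublocale noise: prob_space noise_law
  by (rule prob_space_noise_law)

lemma space_noise_law: "space noise_law = space (matM N)"
  by (rule sets_eq_imp_space_eq[OF sets_noise_law])

lemma distr_noise:
  assumes s: "1 \<le> s"
  shows "distr M (matM N) (noise s) = noise_law"
proof -
  define K where "K = {(i, j, s'). i < N \<and> j < N \<and> s' = s}"
  let ?\<xi> = "\<lambda>(i, j, s). \<xi> i j s"
  have rv: "\<And>k. k \<in> K \<Longrightarrow> random_variable borel (?\<xi> k)"
    using s by (auto intro!: random_variable_\<xi> simp: K_def)
  have "indep_vars (\<lambda>_. borel) ?\<xi> K"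
    by (rule indep_vars_subset[OF indep]) (use s in \<open>auto simp: K_def\<close>)
  moreover have K_ne: "K \<noteq> {}" using N_pos by (auto simp: K_def)
  ultimately have "distr M (PiM K (\<lambda>_. borel)) (\<lambda>\<omega>. \<lambda>k\<in>K. ?\<xi> k \<omega>) = PiM K (\<lambda>k. distr M borel (?\<xi> k))"
    using indep_vars_iff_distr_eq_PiM'[OF K_ne rv] by simp
  also have "\<dots> = PiM K (\<lambda>_. entry_law)"
    using ident s by (intro PiM_cong) (auto simp: K_def entry_law_def)
  finally have law_K: "distr M (PiM K (\<lambda>_. borel)) (\<lambda>\<omega>. \<lambda>k\<in>K. ?\<xi> k \<omega>) = PiM K (\<lambda>_. entry_law)" .
  define f where "f = (\<lambda>q::nat \<times> nat. (fst q, snd q, s))"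
  have f: "inj_on f ({..<N} \<times> {..<N})" "f \<in> {..<N} \<times> {..<N} \<rightarrow> K"
    by (auto simp: f_def K_def inj_on_def)
  have meas_K: "(\<lambda>\<omega>. \<lambda>k\<in>K. ?\<xi> k \<omega>) \<in> measurable M (PiM K (\<lambda>_. borel))"
    by (rule measurable_restrict) (use rv in auto)
  have meas_f: "(\<lambda>u. \<lambda>n\<in>{..<N} \<times> {..<N}. u (f n)) \<in> measurable (PiM K (\<lambda>_. borel)) (matM N)"
    unfolding matM_def
    by (rule measurable_restrict) (use f in \<open>auto intro!: measurable_component_singleton\<close>)
  have "distr M (matM N) (noise s)
      = distr M (matM N) ((\<lambda>u. \<lambda>n\<in>{..<N} \<times> {..<N}. u (f n)) \<circ> (\<lambda>\<omega>. \<lambda>k\<in>K. ?\<xi> k \<omega>))"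
    by (rule distr_cong) (use f in \<open>auto simp: noise_def f_def K_def\<close>)
  also have "\<dots> = distr (PiM K (\<lambda>_. entry_law)) (matM N) (\<lambda>u. \<lambda>n\<in>{..<N} \<times> {..<N}. u (f n))"
    by (simp add: distr_distr[symmetric, OF meas_f meas_K] law_K)
  also have "\<dots> = distr (PiM K (\<lambda>_. entry_law)) noise_law (\<lambda>u. \<lambda>n\<in>{..<N} \<times> {..<N}. u (f n))"
    by (rule distr_cong) (simp_all add: sets_noise_law)
  also have "\<dots> = noise_law"
    unfolding noise_law_def using prob_space_entry_law f by (intro distr_PiM_reindex)
  finally show ?thesis .
qed

lemma step0_noise: "step0 N y (noise s \<omega>) = shift0 N (step N y (\<lambda>i j. \<xi> i j s \<omega>))"
  unfolding step0_def noise_def by (rule arg_cong[where f="shift0 N"], rule step_cong) auto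

lemma kernel0_eq: "kernel0 M N \<xi> y = distr noise_law (stateM N) (step0 N y)"
proof -
  have "kernel0 M N \<xi> y = distr M (stateM N) (step0 N y \<circ> noise 1)"
    unfolding kernel0_def by (simp add: step0_noise comp_def)
  also have "\<dots> = distr noise_law (stateM N) (step0 N y)"
    by (simp add: distr_distr[symmetric, OF step0_measurable_noise[OF N_pos] random_variable_noise]
        distr_noise)
  finally show ?thesis .
qed

definition col0_max :: "(nat \<times> nat \<Rightarrow> real) set" where
  "col0_max = {x \<in> space (matM N). \<forall>i<N. \<forall>j<N. x (i, j) \<le> x (i, 0)}"

definition regen_prob :: real where
  "regen_prob = measure noise_law col0_max"

text \<open>The base point \<open>\<lambda>_. 0\<close> is arbitrary: on \<open>col0_max\<close> the step forgets the state.\<close>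
definition regen :: "(nat \<Rightarrow> real) measure" where
  "regen = distr (density noise_law (indicator col0_max)) (stateM N) (step0 N (\<lambda>_. 0))"

definition residual :: "(nat \<Rightarrow> real) \<Rightarrow> (nat \<Rightarrow> real) measure" where
  "residual y = distr (density noise_law (indicator (space (matM N) - col0_max))) (stateM N) (step0 N y)"

lemma sets_col0_max [measurable]: "col0_max \<in> sets (matM N)"
proof -
  have "col0_max = space (matM N) \<inter> (\<Inter>i<N. \<Inter>j<N. {x \<in> space (matM N). x (i, j) \<le> x (i, 0)})"
    by (auto simp: col0_max_def)
  also have "\<dots> \<in> sets (matM N)"
  proof (intro sets.Int sets.top sets.finite_INT)
    fix i j assume "i \<in> {..<N}" "j \<in> {..<N}"
    then have [measurable]: "i < N" "j < N" "0 < N" using N_pos by auto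
    show "{x \<in> space (matM N). x (i, j) \<le> x (i, 0)} \<in> sets (matM N)" by measurable
  qed (use N_pos in auto)
  finally show ?thesis .
qed

lemma step0_col0_max:
  assumes "\<And>j. j < N \<Longrightarrow> y j \<le> y 0" "x \<in> col0_max"
  shows "step0 N y x = step0 N (\<lambda>_. 0) x"
proof -
  have x: "x (i, j) \<le> x (i, 0)" if "i < N" "j < N" for i j
    using assms(2) that by (auto simp: col0_max_def)
  show ?thesis
    unfolding step0_def
    using shift0_step_col0_max[where N=N and y=y and x="\<lambda>i j. x (i, j)", OF assms(1) N_pos x]
      shift0_step_col0_max[where N=N and y="\<lambda>_. 0" and x="\<lambda>i j. x (i, j)", OF _ N_pos x]
    by simp
qed

lemma regen_prob_pos: "0 < regen_prob"
proof -
  interpret entry: real_distribution entry_law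
    by (simp add: real_distribution_def real_distribution_axioms_def prob_space_entry_law)
  obtain m where m: "0 < entry.prob {m..}" "0 < entry.prob {..m}"
    using entry.exists_both_tails_pos by blast
  define B where "B = PiE ({..<N} \<times> {..<N}) (\<lambda>q. if snd q = 0 then {m..} else {..m})"
  interpret product_sigma_finite "\<lambda>_::nat \<times> nat. entry_law"
    unfolding product_sigma_finite_def using prob_space_imp_sigma_finite[OF prob_space_entry_law] by simp
  have "emeasure noise_law B = (\<Prod>q\<in>{..<N} \<times> {..<N}. emeasure entry_law (if snd q = 0 then {m..} else {..m}))"
    unfolding B_def noise_law_def by (rule emeasure_PiM) auto
  also have "\<dots> \<noteq> 0"
    using m by (auto simp: entry.emeasure_eq_measure)
  finally have "emeasure noise_law B \<noteq> 0" .
  moreover have "B \<subseteq> col0_max"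
  proof
    fix x assume x: "x \<in> B"
    have entry: "x (i, j) \<in> (if j = 0 then {m..} else {..m})" if "i < N" "j < N" for i j
      using PiE_mem[OF x[unfolded B_def], of "(i, j)"] that by simp
    have "x (i, j) \<le> x (i, 0)" if "i < N" "j < N" for i j
      using entry[OF that] entry[OF that(1) N_pos] by (cases "j = 0") auto
    moreover have "x \<in> space (matM N)"
      using x by (auto simp: B_def matM_def space_PiM)
    ultimately show "x \<in> col0_max" by (simp add: col0_max_def)
  qed
  ultimately have "emeasure noise_law col0_max \<noteq> 0"
    by (metis emeasure_mono sets_col0_max sets_noise_law le_zero_eq)
  then show ?thesis
    unfolding regen_prob_def
    by (simp add: noise.emeasure_eq_measure zero_less_measure_iff)
qed

lemma sets_regen: "sets regen = sets (stateM N)"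
  by (simp add: regen_def)

lemma emeasure_regen:
  "A \<in> sets (stateM N) \<Longrightarrow> emeasure regen A = emeasure noise_law (col0_max \<inter> (step0 N (\<lambda>_. 0) -` A \<inter> space noise_law))"
  unfolding regen_def using step0_measurable_noise[OF N_pos]
  by (intro emeasure_distr_density_indicator) (simp_all add: sets_noise_law cong: measurable_cong_sets)

lemma emeasure_residual:
  "A \<in> sets (stateM N) \<Longrightarrow>
    emeasure (residual y) A = emeasure noise_law ((space (matM N) - col0_max) \<inter> (step0 N y -` A \<inter> space noise_law))"
  unfolding residual_def using step0_measurable_noise[OF N_pos]
  by (intro emeasure_distr_density_indicator) (auto simp: sets_noise_law cong: measurable_cong_sets)

lemma kernel0_split:
  assumes y: "\<And>j. j < N \<Longrightarrow> y j \<le> y 0" and A: "A \<in> sets (stateM N)"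
  shows "emeasure (kernel0 M N \<xi> y) A = emeasure regen A + emeasure (residual y) A"
proof -
  let ?S = "step0 N y -` A \<inter> space noise_law"
  have S: "?S \<in> sets noise_law"
    using measurable_sets[OF step0_measurable_noise[OF N_pos] A] by (simp add: sets_noise_law space_noise_law)
  have "emeasure (kernel0 M N \<xi> y) A = emeasure noise_law ?S"
    using A step0_measurable_noise[OF N_pos]
    by (simp add: kernel0_eq emeasure_distr cong: measurable_cong_sets)
  also have "?S = (col0_max \<inter> ?S) \<union> ((space (matM N) - col0_max) \<inter> ?S)"
    by (auto simp: space_noise_law)
  also have "emeasure noise_law \<dots> = emeasure noise_law (col0_max \<inter> ?S) + emeasure noise_law ((space (matM N) - col0_max) \<inter> ?S)"
    using S by (intro plus_emeasure[symmetric]) (auto simp: sets_noise_law)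
  also have "col0_max \<inter> ?S = col0_max \<inter> (step0 N (\<lambda>_. 0) -` A \<inter> space noise_law)"
    using step0_col0_max[where y=y, OF y] by auto
  finally show ?thesis using A by (simp add: emeasure_regen emeasure_residual)
qed

lemma residual_measurable: "residual \<in> measurable (stateM N) (subprob_algebra (stateM N))"
proof -
  let ?\<mu> = "density noise_law (indicator (space (matM N) - col0_max))"
  have "subprob_space ?\<mu>"
    using noise.not_empty
    by (intro subprob_spaceI) (auto simp: emeasure_restricted sets_noise_law space_noise_law noise.emeasure_le_1)
  then have "(\<lambda>y. distr ?\<mu> (stateM N) (step0 N y)) \<in> measurable (stateM N) (subprob_algebra (stateM N))"
    using step0_measurable[OF N_pos]
    by (intro measurable_distr2[where M="?\<mu>"])
      (auto simp: sets_noise_law space_subprob_algebra cong: measurable_cong_sets)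
  then show ?thesis by (simp add: residual_def[abs_def])
qed

sublocale splitting: kernel_splitting "stateM N" "Delta0 N" regen_prob "kernel0 M N \<xi>" residual regen
proof
  have step0_space: "step0 N y -` space (stateM N) \<inter> space noise_law = space noise_law" for y
    using step0_in_Delta0[OF N_pos] by (auto simp: Delta0_def Delta_def)
  have step0_outside: "step0 N y -` (space (stateM N) - Delta0 N) \<inter> space noise_law = {}" for y
    using step0_in_Delta0[OF N_pos] by auto
  show "Delta0 N \<in> sets (stateM N)" by (rule sets_Delta0[OF N_pos])
  show "0 < regen_prob" by (rule regen_prob_pos)
  show "regen_prob \<le> 1" unfolding regen_prob_def by (rule noise.prob_le_1)
  show "sets regen = sets (stateM N)" by (rule sets_regen)
  show "emeasure regen (space (stateM N)) = ennreal regen_prob"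
    using step0_space sets_col0_max
    by (simp add: emeasure_regen space_noise_law Int_absorb2
        noise.emeasure_eq_measure regen_prob_def)
  show "emeasure regen (space (stateM N) - Delta0 N) = 0"
    using N_pos by (simp add: emeasure_regen step0_outside)
  show "residual \<in> measurable (stateM N) (subprob_algebra (stateM N))" by (rule residual_measurable)
  show "emeasure (residual y) (space (stateM N)) = ennreal (1 - regen_prob)" for y
    using step0_space sets_col0_max noise.prob_compl[of col0_max]
    by (simp add: emeasure_residual space_noise_law Int_absorb2 Int_absorb1
        noise.emeasure_eq_measure sets_noise_law regen_prob_def)
  show "emeasure (residual y) (space (stateM N) - Delta0 N) = 0" for y
    using N_pos by (simp add: emeasure_residual step0_outside)
  show "emeasure (kernel0 M N \<xi> y) A = emeasure regen A + emeasure (residual y) A"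
    if "y \<in> Delta0 N" "A \<in> sets (stateM N)" for y A
    using that Delta0_subset_Delta by (intro kernel0_split Delta_le_leading) auto
qed

definition Y_array :: "(nat \<Rightarrow> real) \<Rightarrow> nat \<Rightarrow> (nat \<times> nat \<times> nat \<Rightarrow> real) \<Rightarrow> (nat \<Rightarrow> real)" where
  "Y_array y0 t u = Yproc N (\<lambda>i j s u. u (i, j, s)) y0 t u"

definition noise_until :: "nat \<Rightarrow> 'a \<Rightarrow> (nat \<times> nat \<times> nat \<Rightarrow> real)" where
  "noise_until t \<omega> = (\<lambda>k\<in>{(i, j, s). i < N \<and> j < N \<and> 1 \<le> s \<and> s \<le> t}. (\<lambda>(i, j, s). \<xi> i j s) k \<omega>)"

definition Y0 :: "(nat \<Rightarrow> real) \<Rightarrow> nat \<Rightarrow> 'a \<Rightarrow> (nat \<Rightarrow> real)" where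
  "Y0 y0 t \<omega> = shift0 N (Yproc N \<xi> y0 t \<omega>)"

lemma Yproc_eq_Y_array: "t \<le> T \<Longrightarrow> Yproc N \<xi> y0 t \<omega> = Y_array y0 t (noise_until T \<omega>)"
proof (induction t)
  case (Suc t)
  then show ?case
    unfolding Y_array_def Yproc.simps
    by (intro step_cong) (auto simp: noise_until_def Y_array_def)
qed (simp add: Y_array_def)

lemma Y_array_measurable:
  assumes "y0 \<in> space (stateM N)" "t \<le> T"
  shows "Y_array y0 t \<in> measurable (PiM {(i, j, s). i < N \<and> j < N \<and> 1 \<le> s \<and> s \<le> T} (\<lambda>_. borel)) (stateM N)"
  using assms(2)
proof (induction t)
  case 0
  then show ?case using assms(1) by (simp add: Y_array_def)
next
  case (Suc t)
  let ?P = "PiM {(i, j, s). i < N \<and> j < N \<and> 1 \<le> s \<and> s \<le> T} (\<lambda>_. borel)"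
  let ?row = "\<lambda>u. \<lambda>q\<in>{..<N} \<times> {..<N}. u (fst q, snd q, Suc t)"
  have "?row \<in> measurable ?P (matM N)"
    unfolding matM_def using Suc.prems
    by (intro measurable_restrict) (auto intro!: measurable_component_singleton)
  then have "(\<lambda>u. (\<lambda>(y, x). step N y (\<lambda>i j. x (i, j))) (Y_array y0 t u, ?row u)) \<in> measurable ?P (stateM N)"
    using Suc by (intro measurable_compose[OF measurable_Pair step_measurable]) auto
  moreover have "(\<lambda>(y, x). step N y (\<lambda>i j. x (i, j))) (Y_array y0 t u, ?row u) = Y_array y0 (Suc t) u" for u
    unfolding Y_array_def by (simp, rule step_cong) auto
  ultimately show ?case by simp
qed

lemma random_variable_noise_until:
  "random_variable (PiM {(i, j, s). i < N \<and> j < N \<and> 1 \<le> s \<and> s \<le> t} (\<lambda>_. borel)) (noise_until t)"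
  unfolding noise_until_def by (rule measurable_restrict) (auto intro: random_variable_\<xi>)

lemma Y0_eq_Y_array: "Y0 y0 t = (\<lambda>\<omega>. shift0 N (Y_array y0 t (noise_until t \<omega>)))"
  by (simp add: fun_eq_iff Y0_def Yproc_eq_Y_array[OF order_refl])

lemma random_variable_Y0:
  assumes "y0 \<in> space (stateM N)" shows "random_variable (stateM N) (Y0 y0 t)"
  using measurable_comp[OF random_variable_noise_until
      measurable_comp[OF Y_array_measurable[OF assms order_refl] shift0_measurable[OF N_pos]]]
  by (simp add: Y0_eq_Y_array comp_def)

lemma Y0_in_Delta0: "y0 \<in> Delta N \<Longrightarrow> Y0 y0 t \<omega> \<in> Delta0 N"
  by (cases t) (auto simp: Y0_def intro!: shift0_in_Delta0 step_in_Delta N_pos)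

lemma Y0_Suc: "Y0 y0 (Suc t) \<omega> = step0 N (Y0 y0 t \<omega>) (noise (Suc t) \<omega>)"
  by (simp add: Y0_def step0_noise shift0_step_shift0[OF N_pos])

lemma distr_Y0_noise:
  assumes y0: "y0 \<in> space (stateM N)"
  shows "distr M (stateM N \<Otimes>\<^sub>M matM N) (\<lambda>\<omega>. (Y0 y0 t \<omega>, noise (Suc t) \<omega>))
       = distr M (stateM N) (Y0 y0 t) \<Otimes>\<^sub>M noise_law"
proof -
  let ?next = "{(i, j, s). i < N \<and> j < N \<and> s = Suc t}"
  let ?row = "\<lambda>v. \<lambda>q\<in>{..<N} \<times> {..<N}. v (fst q, snd q, Suc t)"
  have indep_past_next: "indep_var (PiM {(i, j, s). i < N \<and> j < N \<and> 1 \<le> s \<and> s \<le> t} (\<lambda>_. borel))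
      (noise_until t) (PiM ?next (\<lambda>_. borel)) (\<lambda>\<omega>. \<lambda>k\<in>?next. (\<lambda>(i, j, s). \<xi> i j s) k \<omega>)"
    unfolding noise_until_def by (rule indep_var_restrict[OF indep]) auto
  have row: "?row \<in> measurable (PiM ?next (\<lambda>_. borel)) (matM N)"
    unfolding matM_def by (intro measurable_restrict) (auto intro!: measurable_component_singleton)
  have "?row (\<lambda>k\<in>?next. (\<lambda>(i, j, s). \<xi> i j s) k \<omega>) = noise (Suc t) \<omega>" for \<omega>
    by (auto simp: noise_def)
  then show ?thesis
    using distr_Pair_indep_var_comp[OF indep_past_next
        measurable_comp[OF Y_array_measurable[OF y0 order_refl] shift0_measurable[OF N_pos]] row]
    by (simp add: Y0_eq_Y_array distr_noise)
qed

lemma emeasure_distr_Y0_Suc: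
  assumes y0: "y0 \<in> space (stateM N)" and A: "A \<in> sets (stateM N)"
  shows "emeasure (distr M (stateM N) (Y0 y0 (Suc t))) A
       = (\<integral>\<^sup>+y. emeasure (kernel0 M N \<xi> y) A \<partial>distr M (stateM N) (Y0 y0 t))"
proof -
  let ?S = "(\<lambda>(y, x). step0 N y x) -` A \<inter> space (stateM N \<Otimes>\<^sub>M matM N)"
  have S: "?S \<in> sets (stateM N \<Otimes>\<^sub>M matM N)"
    using measurable_sets[OF step0_measurable[OF N_pos] A] .
  have pair: "(\<lambda>\<omega>. (Y0 y0 t \<omega>, noise (Suc t) \<omega>)) \<in> measurable M (stateM N \<Otimes>\<^sub>M matM N)"
    by (intro measurable_Pair random_variable_Y0[OF y0] random_variable_noise) simp
  have "Y0 y0 (Suc t) -` A \<inter> space M = (\<lambda>\<omega>. (Y0 y0 t \<omega>, noise (Suc t) \<omega>)) -` ?S \<inter> space M"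
    using measurable_space[OF pair] by (auto simp: Y0_Suc)
  then have "emeasure (distr M (stateM N) (Y0 y0 (Suc t))) A
      = emeasure (distr M (stateM N \<Otimes>\<^sub>M matM N) (\<lambda>\<omega>. (Y0 y0 t \<omega>, noise (Suc t) \<omega>))) ?S"
    using A S by (simp add: emeasure_distr random_variable_Y0[OF y0] pair)
  also have "\<dots> = emeasure (distr M (stateM N) (Y0 y0 t) \<Otimes>\<^sub>M noise_law) ?S"
    by (simp add: distr_Y0_noise[OF y0])
  also have "\<dots> = (\<integral>\<^sup>+y. emeasure noise_law (Pair y -` ?S) \<partial>distr M (stateM N) (Y0 y0 t))"
    using S by (intro noise.emeasure_pair_measure_alt) (simp add: sets_noise_law cong: sets_pair_measure_cong)
  also have "\<dots> = (\<integral>\<^sup>+y. emeasure (kernel0 M N \<xi> y) A \<partial>distr M (stateM N) (Y0 y0 t))"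
  proof (rule nn_integral_cong)
    fix y assume "y \<in> space (distr M (stateM N) (Y0 y0 t))"
    then have "Pair y -` ?S = step0 N y -` A \<inter> space noise_law"
      by (auto simp: space_pair_measure space_noise_law)
    then show "emeasure noise_law (Pair y -` ?S) = emeasure (kernel0 M N \<xi> y) A"
      using A step0_measurable_noise[OF N_pos]
      by (simp add: kernel0_eq emeasure_distr cong: measurable_cong_sets)
  qed
  finally show ?thesis .
qed

lemma invariant0_stationary: "invariant0 M N \<xi> splitting.stationary"
proof -
  interpret stationary: prob_space splitting.stationary
    by (rule splitting.prob_space_stationary)
  have "emeasure splitting.stationary (Delta0 N) = 1"
    using stationary.emeasure_eq_1_iff_compl_null[of "Delta0 N"] splitting.stationary_outside_D N_pos
    by (simp add: splitting.sets_stationary sets_eq_imp_space_eq[OF splitting.sets_stationary])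
  then show ?thesis
    unfolding invariant0_def
    using splitting.sets_stationary splitting.prob_space_stationary splitting.stationary_invariant
    by blast
qed

lemma invariant0_eq_stationary:
  assumes "invariant0 M N \<xi> \<nu>"
  shows "\<nu> = splitting.stationary"
proof -
  have sets_\<nu>: "sets \<nu> = sets (stateM N)" and prob_\<nu>: "prob_space \<nu>"
    and Delta0: "emeasure \<nu> (Delta0 N) = 1"
    and invariant: "\<And>A. A \<in> sets (stateM N) \<Longrightarrow> emeasure \<nu> A = (\<integral>\<^sup>+y. emeasure (kernel0 M N \<xi> y) A \<partial>\<nu>)"
    using assms by (auto simp: invariant0_def)
  interpret \<nu>: prob_space \<nu> by (rule prob_\<nu>)
  have "emeasure \<nu> (space (stateM N) - Delta0 N) = 0"
    using \<nu>.emeasure_eq_1_iff_compl_null[of "Delta0 N"] Delta0 N_pos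
    by (simp add: sets_\<nu> sets_eq_imp_space_eq[OF sets_\<nu>])
  then show ?thesis
    by (rule splitting.invariant_eq_stationary[OF sets_\<nu> prob_\<nu> _ invariant])
qed

lemma dist_Y0_stationary_le:
  assumes y0: "y0 \<in> Delta N" and A: "A \<in> sets (stateM N)"
  shows "\<bar>measure (distr M (stateM N) (Y0 y0 t)) A - measure splitting.stationary A\<bar> \<le> (1 - regen_prob) ^ t"
proof (rule splitting.chain_dist_stationary_le[where \<alpha>="\<lambda>t. distr M (stateM N) (Y0 y0 t)", OF _ _ _ _ A])
  have y0_space: "y0 \<in> space (stateM N)" using y0 by (simp add: Delta_def)
  show "sets (distr M (stateM N) (Y0 y0 t)) = sets (stateM N)" for t by simp
  show "prob_space (distr M (stateM N) (Y0 y0 t))" for t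
    by (rule prob_space_distr[OF random_variable_Y0[OF y0_space]])
  have "Y0 y0 t -` (space (stateM N) - Delta0 N) \<inter> space M = {}" for t
    using Y0_in_Delta0[OF y0] by blast
  then show "emeasure (distr M (stateM N) (Y0 y0 t)) (space (stateM N) - Delta0 N) = 0" for t
    using N_pos by (simp add: emeasure_distr[OF random_variable_Y0[OF y0_space]])
  show "emeasure (distr M (stateM N) (Y0 y0 (Suc t))) B
      = (\<integral>\<^sup>+y. emeasure (kernel0 M N \<xi> y) B \<partial>distr M (stateM N) (Y0 y0 t))"
    if "B \<in> sets (stateM N)" for t B
    by (rule emeasure_distr_Y0_Suc[OF y0_space that])
qed

lemma tv_dist_Y0_stationary:
  assumes "y0 \<in> Delta N"
  shows "0 \<le> tv_dist (distr M (stateM N) (Y0 y0 t)) splitting.stationary"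
    and "tv_dist (distr M (stateM N) (Y0 y0 t)) splitting.stationary \<le> (1 - regen_prob) ^ t"
  using dist_Y0_stationary_le[OF assms]
  by (auto intro!: tv_dist_nonneg[where c="(1 - regen_prob) ^ t"] tv_dist_le[where c="(1 - regen_prob) ^ t"])

lemma tv_dist_Y0_stationary_tendsto_0:
  assumes "y0 \<in> Delta N"
  shows "(\<lambda>t. tv_dist (distr M (stateM N) (Y0 y0 t)) splitting.stationary) \<longlonglongrightarrow> 0"
proof (rule tendsto_sandwich[OF always_eventually always_eventually tendsto_const])
  show "(\<lambda>t. (1 - regen_prob) ^ t) \<longlonglongrightarrow> 0"
    using regen_prob_pos splitting.p_le_1 by (intro LIMSEQ_power_zero) simp
qed (use tv_dist_Y0_stationary[OF assms] in auto)

end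

theorem proposition2p1:
  fixes M :: "'a measure" and N :: nat and \<xi> :: "nat \<Rightarrow> nat \<Rightarrow> nat \<Rightarrow> 'a \<Rightarrow> real"
  assumes "prob_space M"
    and "N \<ge> 1"
    and indep: "prob_space.indep_vars M (\<lambda>_. borel) (\<lambda>(i, j, s). \<xi> i j s)
                  {(i, j, s). i < N \<and> j < N \<and> s \<ge> 1}"
    and ident: "\<And>i j s. i < N \<Longrightarrow> j < N \<Longrightarrow> s \<ge> 1 \<Longrightarrow>
                  distr M borel (\<xi> i j s) = distr M borel (\<xi> 0 0 1)"
  shows "\<exists>\<nu>. invariant0 M N \<xi> \<nu>
           \<and> (\<forall>\<nu>'. invariant0 M N \<xi> \<nu>' \<longrightarrow> \<nu>' = \<nu>)
           \<and> (\<forall>y0 \<in> Delta N.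
                (\<lambda>t. tv_dist (distr M (stateM N) (\<lambda>\<omega>. shift0 N (Yproc N \<xi> y0 t \<omega>))) \<nu>)
                  \<longlonglongrightarrow> 0)
           \<and> (\<exists>\<delta>>0. \<forall>y0 \<in> Delta N. \<forall>t.
                tv_dist (distr M (stateM N) (\<lambda>\<omega>. shift0 N (Yproc N \<xi> y0 t \<omega>))) \<nu> \<le> (1 - \<delta>) ^ t)"
proof -
  interpret leading_edge_chain M N \<xi>
  proof (intro leading_edge_chain.intro leading_edge_chain_axioms.intro)
    show "0 < N" using \<open>N \<ge> 1\<close> by simp
  qed (fact assms)+
  have Y0_eq: "(\<lambda>\<omega>. shift0 N (Yproc N \<xi> y0 t \<omega>)) = Y0 y0 t" for y0 t
    by (simp add: Y0_def fun_eq_iff)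
  show ?thesis
    unfolding Y0_eq
  proof (intro exI[of _ splitting.stationary] conjI ballI allI impI)
    show "invariant0 M N \<xi> splitting.stationary" by (rule invariant0_stationary)
    show "\<nu>' = splitting.stationary" if "invariant0 M N \<xi> \<nu>'" for \<nu>'
      using that by (rule invariant0_eq_stationary)
    show "\<exists>\<delta>>0. \<forall>y0\<in>Delta N. \<forall>t. tv_dist (distr M (stateM N) (Y0 y0 t)) splitting.stationary \<le> (1 - \<delta>) ^ t"
      using regen_prob_pos tv_dist_Y0_stationary(2) by blast
  qed (rule tv_dist_Y0_stationary_tendsto_0)
qed

end
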